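(* Let $\Sigma$ be a set of labels, $h\in\mathbb{N}_0$, and let $\mathcal{G}$ be a set of finite simple undirected graphs each equipped with a vertex labelling $\mathrm{lab}:V(G)\to\Sigma$. Let $\mathcal{V}$ be the disjoint union of the vertex sets of the graphs in $\mathcal{G}$, let $\mathrm{lab}_0,\dots,\mathrm{lab}_h$ be the Weisfeiler-Lehman colourings, and define the base kernel $k(u,v)=\sum_{i=0}^h[\mathrm{lab}_i(u)=\mathrm{lab}_i(v)]$ on $\mathcal{V}$ (where $[\cdot]$ is $1$ if the condition holds and $0$ otherwise). Then: (i) for all $u,v\in\mathcal{V}$ and $i<h$, $\mathrm{lab}_i(u)\ne\mathrm{lab}_i(v)$ implies $\mathrm{lab}_{i+1}(u)\ne\mathrm{lab}_{i+1}(v)$; (ii) $k$ is a strong kernel on $\mathcal{V}$; (iii) the Weisfeiler-Lehman optimal assignment kernel $K(G,H)=\mathrm{OA}_k(V(G),V(H))$ satisfies $$K(G,H)=\sum_{i=0}^h\sum_{c}\min\{|\{v\in V(G):\mathrm{lab}_i(v)=c\}|,\,|\{v\in V(H):\mathrm{lab}_i(v)=c\}|\},$$ the inner sum ranging over all colours $c$; and (iv) $K$ is a valid kernel on $\mathcal{G}$.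
   Context: Weisfeiler-Lehman colourings: $\mathrm{lab}_0=\mathrm{lab}$, and for $i\ge1$, for every vertex $v$ of a graph $G\in\mathcal{G}$ form the sequence consisting of $\mathrm{lab}_{i-1}(v)$ followed by the lexicographically sorted multiset $\{\mathrm{lab}_{i-1}(u): uv\in E(G)\}$ of colours of its neighbours; then $\mathrm{lab}_i(v)$ is the image of this sequence under a fixed injective map from sequences to new colours, the same map being used for all graphs in $\mathcal{G}$. A strong kernel on a set $\mathcal{X}$ is a symmetric function $k:\mathcal{X}\times\mathcal{X}\to\mathbb{R}_{\ge 0}$ such that $k(x,y)\ge\min\{k(x,z),k(z,y)\}$ for all $x,y,z\in\mathcal{X}$. A valid kernel on a set $\mathcal{S}$ is a symmetric function $K:\mathcal{S}\times\mathcal{S}\to\mathbb{R}$ such that for every finite collection $s_1,\dots,s_m\in\mathcal{S}$ the matrix $(K(s_i,s_j))_{i,j}$ is positive semidefinite. For finite sets $A,B$ and a nonnegative function $k$ on pairs of their elements, $\mathrm{OA}_k(A,B)=\max_{\sigma}\sum_{a\in A}k(a,\sigma(a))$ over all injections $\sigma:A\to B$ if $|A|\le|B|$, and $\mathrm{OA}_k(A,B)=\mathrm{OA}_k(B,A)$ if $|A|>|B|$ (equivalently: pad the smaller set with new elements $z$ having $k(z,\cdot)=0$ and maximize over bijections). *)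

theory Defs
  imports Complex_Main "HOL-Library.Multiset"
begin

text \<open>The disjoint union of the
  vertex sets is represented by the set of pairs (g, v) with v in V g.
  Colours live in a linearly ordered type 'c (which contains the labels);
  f is the fixed injective map from colour sequences to colours.\<close>

definition finite_simple_graph :: "'v set \<Rightarrow> ('v \<Rightarrow> 'v \<Rightarrow> bool) \<Rightarrow> bool" where
  "finite_simple_graph V E \<longleftrightarrow> finite V \<and> (\<forall>u v. E u v \<longrightarrow> u \<in> V \<and> v \<in> V)
     \<and> (\<forall>u v. E u v \<longrightarrow> E v u) \<and> (\<forall>v. \<not> E v v)"

definition disj_union :: "'g set \<Rightarrow> ('g \<Rightarrow> 'v set) \<Rightarrow> ('g \<times> 'v) set" where
  "disj_union \<G> V = {(g, v). g \<in> \<G> \<and> v \<in> V g}"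

primrec wl :: "('c::linorder list \<Rightarrow> 'c) \<Rightarrow> ('g \<Rightarrow> 'v set) \<Rightarrow> ('g \<Rightarrow> 'v \<Rightarrow> 'v \<Rightarrow> bool)
    \<Rightarrow> ('g \<Rightarrow> 'v \<Rightarrow> 'c) \<Rightarrow> nat \<Rightarrow> 'g \<times> 'v \<Rightarrow> 'c" where
  "wl f V E lab 0 x = lab (fst x) (snd x)"
| "wl f V E lab (Suc i) x =
     f (wl f V E lab i x #
        sorted_list_of_multiset
          (image_mset (\<lambda>u. wl f V E lab i (fst x, u))
             (mset_set {u \<in> V (fst x). E (fst x) u (snd x)})))"

definition wl_base_kernel :: "('c::linorder list \<Rightarrow> 'c) \<Rightarrow> ('g \<Rightarrow> 'v set) \<Rightarrow> ('g \<Rightarrow> 'v \<Rightarrow> 'v \<Rightarrow> bool)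
    \<Rightarrow> ('g \<Rightarrow> 'v \<Rightarrow> 'c) \<Rightarrow> nat \<Rightarrow> 'g \<times> 'v \<Rightarrow> 'g \<times> 'v \<Rightarrow> real" where
  "wl_base_kernel f V E lab h x y =
     (\<Sum>i\<in>{0..h}. if wl f V E lab i x = wl f V E lab i y then 1 else 0)"

definition strong_kernel :: "'x set \<Rightarrow> ('x \<Rightarrow> 'x \<Rightarrow> real) \<Rightarrow> bool" where
  "strong_kernel X k \<longleftrightarrow>
     (\<forall>x\<in>X. \<forall>y\<in>X. k x y = k y x \<and> k x y \<ge> 0) \<and>
     (\<forall>x\<in>X. \<forall>y\<in>X. \<forall>z\<in>X. k x y \<ge> min (k x z) (k z y))"

definition valid_kernel :: "'s set \<Rightarrow> ('s \<Rightarrow> 's \<Rightarrow> real) \<Rightarrow> bool" where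
  "valid_kernel S K \<longleftrightarrow>
     (\<forall>x\<in>S. \<forall>y\<in>S. K x y = K y x) \<and>
     (\<forall>xs c. set xs \<subseteq> S \<longrightarrow>
        (\<Sum>i<length xs. \<Sum>j<length xs. c i * c j * K (xs ! i) (xs ! j)) \<ge> 0)"

definition oa_inj :: "('x \<Rightarrow> 'x \<Rightarrow> real) \<Rightarrow> 'x set \<Rightarrow> 'x set \<Rightarrow> real" where
  "oa_inj k A B = Max {(\<Sum>a\<in>A. k a (\<sigma> a)) | \<sigma>. inj_on \<sigma> A \<and> \<sigma> ` A \<subseteq> B}"

definition OA :: "('x \<Rightarrow> 'x \<Rightarrow> real) \<Rightarrow> 'x set \<Rightarrow> 'x set \<Rightarrow> real" where
  "OA k A B = (if card A \<le> card B then oa_inj k A B else oa_inj k B A)"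

definition wl_oa_kernel :: "('c::linorder list \<Rightarrow> 'c) \<Rightarrow> ('g \<Rightarrow> 'v set) \<Rightarrow> ('g \<Rightarrow> 'v \<Rightarrow> 'v \<Rightarrow> bool)
    \<Rightarrow> ('g \<Rightarrow> 'v \<Rightarrow> 'c) \<Rightarrow> nat \<Rightarrow> 'g \<Rightarrow> 'g \<Rightarrow> real" where
  "wl_oa_kernel f V E lab h g g' =
     OA (wl_base_kernel f V E lab h) ({g} \<times> V g) ({g'} \<times> V g')"

end

theory Submission
  imports Defs "HOL-Library.FuncSet"
begin

text \<open>Since every colouring refines the previous one, two vertices agree exactly on an
  initial segment of the levels 0..h, and k(u,v) is the length of that segment. Hence a
  pair of larger kernel value agrees wherever a pair of smaller value does; this gives the
  strong-kernel inequality, and it shows that matching a pair of maximal kernel value first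
  loses nothing at any level. Matching greedily therefore pairs, at every level and for
  every colour, as many vertices of that colour as both graphs have, which is the histogram
  intersection. Finally, min(m,n) is the inner product of the 0/1 vectors of [t < m] and
  [t < n], so the histogram intersection is an inner product of feature vectors and thus
  positive semidefinite.\<close>

definition refining :: "(nat \<Rightarrow> 'x \<Rightarrow> 'c) \<Rightarrow> bool" where
  "refining L \<longleftrightarrow> (\<forall>i x y. L (Suc i) x = L (Suc i) y \<longrightarrow> L i x = L i y)"

lemma refining_agree_le:
  assumes "refining L" "L j x = L j y" "i \<le> j"
  shows "L i x = L i y"
  using assms(3,2)
proof (induction rule: inc_induct)
  case (step n)
  then show ?case using assms(1) unfolding refining_def by blast
qed

definition match_kernel :: "(nat \<Rightarrow> 'x \<Rightarrow> 'c) \<Rightarrow> nat \<Rightarrow> 'x \<Rightarrow> 'x \<Rightarrow> real" where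
  "match_kernel L h x y = (\<Sum>i\<in>{0..h}. if L i x = L i y then 1 else 0)"

lemma match_kernel_mono:
  assumes "\<And>i. i \<le> h \<Longrightarrow> L i u = L i w \<Longrightarrow> L i x = L i y"
  shows "match_kernel L h u w \<le> match_kernel L h x y"
  unfolding match_kernel_def using assms by (intro sum_mono) auto

lemma match_kernel_le_imp_agree:
  assumes "refining L" "match_kernel L h x y \<le> match_kernel L h u w"
    and "i \<le> h" "L i x = L i y"
  shows "L i u = L i w"
proof (rule ccontr)
  assume disagree: "L i u \<noteq> L i w"
  have "L j x = L j y" if "L j u = L j w" for j
  proof -
    have "j < i" using refining_agree_le[OF assms(1) that] disagree by (meson not_le)
    then show ?thesis using refining_agree_le[OF assms(1,4)] by simp
  qed
  then have "match_kernel L h u w < match_kernel L h x y"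
    unfolding match_kernel_def
    by (intro sum_strict_mono_ex1) (use assms(3,4) disagree in auto)
  with assms(2) show False by simp
qed

lemma strong_kernel_match_kernel:
  assumes "refining L"
  shows "strong_kernel X (match_kernel L h)"
  unfolding strong_kernel_def
proof (intro conjI ballI)
  fix x y z
  show "match_kernel L h x y = match_kernel L h y x"
    unfolding match_kernel_def by (simp add: eq_commute)
  show "match_kernel L h x y \<ge> 0"
    unfolding match_kernel_def by (intro sum_nonneg) auto
  show "match_kernel L h x y \<ge> min (match_kernel L h x z) (match_kernel L h z y)"
  proof (cases "match_kernel L h x z \<le> match_kernel L h z y")
    case True
    then have "match_kernel L h x z \<le> match_kernel L h x y"
      using match_kernel_le_imp_agree[OF assms True] by (intro match_kernel_mono) auto
    then show ?thesis by simp
  next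
    case False
    then have "match_kernel L h z y \<le> match_kernel L h x z" by simp
    then have "match_kernel L h z y \<le> match_kernel L h x y"
      using match_kernel_le_imp_agree[OF assms] by (intro match_kernel_mono) metis
    then show ?thesis by simp
  qed
qed

definition colour_count :: "(nat \<Rightarrow> 'x \<Rightarrow> 'c) \<Rightarrow> nat \<Rightarrow> 'x set \<Rightarrow> 'c \<Rightarrow> nat" where
  "colour_count L i A c = card {a \<in> A. L i a = c}"

definition level_intersection :: "(nat \<Rightarrow> 'x \<Rightarrow> 'c) \<Rightarrow> nat \<Rightarrow> 'x set \<Rightarrow> 'x set \<Rightarrow> real" where
  "level_intersection L i A B =
     (\<Sum>c\<in>L i ` A. real (min (colour_count L i A c) (colour_count L i B c)))"

definition histogram_intersection :: "(nat \<Rightarrow> 'x \<Rightarrow> 'c) \<Rightarrow> nat \<Rightarrow> 'x set \<Rightarrow> 'x set \<Rightarrow> real" where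
  "histogram_intersection L h A B = (\<Sum>i\<in>{0..h}. level_intersection L i A B)"

lemma colour_count_eq_0: "c \<notin> L i ` A \<Longrightarrow> colour_count L i A c = 0"
  unfolding colour_count_def by (metis (mono_tags, lifting) card.empty empty_Collect_eq image_eqI)

lemma colour_count_remove:
  assumes "finite A" "a \<in> A"
  shows "colour_count L i (A - {a}) c = colour_count L i A c - (if L i a = c then 1 else 0)"
proof -
  have "{x \<in> A - {a}. L i x = c} = {x \<in> A. L i x = c} - {a}" by auto
  then show ?thesis unfolding colour_count_def using assms by (simp add: card_Diff_singleton_if)
qed

lemma colour_count_mono: "finite A \<Longrightarrow> A' \<subseteq> A \<Longrightarrow> colour_count L i A' c \<le> colour_count L i A c"
  unfolding colour_count_def by (intro card_mono) auto

lemma colour_count_le_card: "finite A \<Longrightarrow> colour_count L i A c \<le> card A"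
  unfolding colour_count_def by (intro card_mono) auto

lemma colour_count_Times_singleton:
  "colour_count L i ({g} \<times> S) c = card {v \<in> S. L i (g, v) = c}"
proof -
  have "{a \<in> {g} \<times> S. L i a = c} = Pair g ` {v \<in> S. L i (g, v) = c}" by auto
  then show ?thesis unfolding colour_count_def by (simp add: card_image inj_on_def)
qed

lemma level_intersection_eq_sum:
  assumes "finite C" "L i ` A \<subseteq> C"
  shows "level_intersection L i A B =
           (\<Sum>c\<in>C. real (min (colour_count L i A c) (colour_count L i B c)))"
  unfolding level_intersection_def
  by (rule sum.mono_neutral_left) (use assms in \<open>auto simp: colour_count_eq_0\<close>)

lemma level_intersection_commute:
  assumes "finite A" "finite B"
  shows "level_intersection L i A B = level_intersection L i B A"
  using level_intersection_eq_sum[of "L i ` A \<union> L i ` B" L i A]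
    level_intersection_eq_sum[of "L i ` A \<union> L i ` B" L i B] assms
  by (simp add: min.commute)

lemma level_intersection_mono:
  assumes "finite A" "finite B" "A' \<subseteq> A" "B' \<subseteq> B"
  shows "level_intersection L i A' B' \<le> level_intersection L i A B"
proof -
  have "level_intersection L i A' B' =
          (\<Sum>c\<in>L i ` A. real (min (colour_count L i A' c) (colour_count L i B' c)))"
    using assms by (intro level_intersection_eq_sum) auto
  also have "\<dots> \<le> level_intersection L i A B"
    unfolding level_intersection_def
    using assms by (intro sum_mono of_nat_mono min.mono colour_count_mono)
  finally show ?thesis .
qed

lemma level_intersection_remove_match:
  assumes "finite A" "finite B" "a \<in> A" "b \<in> B" "L i a = L i b"
  shows "level_intersection L i A B = 1 + level_intersection L i (A - {a}) (B - {b})"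
proof -
  have "real (min (colour_count L i A c) (colour_count L i B c)) =
        real (min (colour_count L i (A - {a}) c) (colour_count L i (B - {b}) c))
          + (if c = L i a then 1 else 0)" for c
  proof -
    have "colour_count L i A (L i a) \<ge> 1" "colour_count L i B (L i a) \<ge> 1"
      using assms unfolding colour_count_def
      by (auto simp: Suc_le_eq card_gt_0_iff)
    then show ?thesis using assms by (auto simp: colour_count_remove)
  qed
  moreover have "level_intersection L i (A - {a}) (B - {b}) =
      (\<Sum>c\<in>L i ` A. real (min (colour_count L i (A - {a}) c) (colour_count L i (B - {b}) c)))"
    using assms by (intro level_intersection_eq_sum) auto
  moreover have "L i a \<in> L i ` A" using assms(3) by simp
  ultimately show ?thesis
    using assms(1) by (simp add: level_intersection_def sum.distrib)
qed

lemma level_intersection_eq_0: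
  assumes "\<forall>a\<in>A. \<forall>b\<in>B. L i a \<noteq> L i b"
  shows "level_intersection L i A B = 0"
proof -
  have "{b \<in> B. L i b = c} = {}" if "c \<in> L i ` A" for c
    using assms that by (auto simp: image_iff) metis
  then have "colour_count L i B c = 0" if "c \<in> L i ` A" for c
    using that unfolding colour_count_def by (metis card.empty)
  then show ?thesis unfolding level_intersection_def by simp
qed

lemma histogram_intersection_commute:
  "finite A \<Longrightarrow> finite B \<Longrightarrow> histogram_intersection L h A B = histogram_intersection L h B A"
  unfolding histogram_intersection_def by (simp add: level_intersection_commute)

lemma histogram_intersection_nonneg: "histogram_intersection L h A B \<ge> 0"
  unfolding histogram_intersection_def level_intersection_def by (intro sum_nonneg) auto

lemma histogram_intersection_remove_le:
  assumes "finite A" "finite B" "a \<in> A" "b \<in> B"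
  shows "match_kernel L h a b + histogram_intersection L h (A - {a}) (B - {b})
           \<le> histogram_intersection L h A B"
  unfolding match_kernel_def histogram_intersection_def sum.distrib[symmetric]
  using level_intersection_remove_match[OF assms, of L]
    level_intersection_mono[OF assms(1,2), of "A - {a}" "B - {b}" L]
  by (intro sum_mono) auto

lemma histogram_intersection_remove_max:
  assumes "refining L" "finite A" "finite B" "a \<in> A" "b \<in> B"
    and max: "\<forall>a'\<in>A. \<forall>b'\<in>B. match_kernel L h a' b' \<le> match_kernel L h a b"
  shows "match_kernel L h a b + histogram_intersection L h (A - {a}) (B - {b})
           = histogram_intersection L h A B"
  unfolding match_kernel_def histogram_intersection_def sum.distrib[symmetric]
proof (intro sum.cong refl)
  fix i assume i: "i \<in> {0..h}"
  show "(if L i a = L i b then 1 else 0) + level_intersection L i (A - {a}) (B - {b})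
          = level_intersection L i A B"
  proof (cases "L i a = L i b")
    case True
    then show ?thesis using level_intersection_remove_match[OF assms(2-5), of L i] by simp
  next
    case False
    \<comment> \<open>a matching pair at level i would have a larger kernel value than the maximal pair\<close>
    then have "\<forall>a'\<in>A. \<forall>b'\<in>B. L i a' \<noteq> L i b'"
      using match_kernel_le_imp_agree[OF assms(1)] max i by (metis atLeastAtMost_iff)
    then show ?thesis using False by (simp add: level_intersection_eq_0)
  qed
qed

lemma assignment_sum_le_histogram_intersection:
  assumes "finite A" "finite B" "inj_on \<sigma> A" "\<sigma> ` A \<subseteq> B"
  shows "(\<Sum>a\<in>A. match_kernel L h a (\<sigma> a)) \<le> histogram_intersection L h A B"
  using assms
proof (induction A arbitrary: B rule: finite_induct)
  case empty
  then show ?case using histogram_intersection_nonneg by simp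
next
  case (insert a A)
  have "\<sigma> ` A \<subseteq> B - {\<sigma> a}" using insert.prems insert.hyps(2) by (auto simp: inj_on_def)
  then have "(\<Sum>x\<in>A. match_kernel L h x (\<sigma> x)) \<le> histogram_intersection L h A (B - {\<sigma> a})"
    using insert by (auto simp: inj_on_insert)
  moreover have "match_kernel L h a (\<sigma> a) + histogram_intersection L h A (B - {\<sigma> a})
                   \<le> histogram_intersection L h (insert a A) B"
    using histogram_intersection_remove_le[of "insert a A" B a "\<sigma> a" L h] insert by simp
  ultimately show ?case using insert.hyps by simp
qed

lemma finite_pairs_have_max:
  fixes k :: "'a \<Rightarrow> 'b \<Rightarrow> 'r::linorder"
  assumes "finite A" "finite B" "A \<noteq> {}" "B \<noteq> {}"
  obtains a b where "a \<in> A" "b \<in> B" "\<forall>a'\<in>A. \<forall>b'\<in>B. k a' b' \<le> k a b"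
proof -
  have "Max (case_prod k ` (A \<times> B)) \<in> case_prod k ` (A \<times> B)"
    using assms by (intro Max_in) auto
  then obtain a b where "a \<in> A" "b \<in> B" "k a b = Max (case_prod k ` (A \<times> B))" by auto
  moreover have "k a' b' \<le> Max (case_prod k ` (A \<times> B))" if "a' \<in> A" "b' \<in> B" for a' b'
    using assms that by (intro Max_ge) auto
  ultimately show ?thesis using that by metis
qed

lemma exists_assignment_eq_histogram_intersection:
  assumes "refining L" "finite A" "finite B" "card A \<le> card B"
  shows "\<exists>\<sigma>. inj_on \<sigma> A \<and> \<sigma> ` A \<subseteq> B
               \<and> (\<Sum>a\<in>A. match_kernel L h a (\<sigma> a)) = histogram_intersection L h A B"
  using assms(2-4)
proof (induction "card A" arbitrary: A B)
  case 0
  then show ?case by (simp add: histogram_intersection_def level_intersection_def)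
next
  case (Suc n)
  then have "A \<noteq> {}" "B \<noteq> {}" by auto
  with Suc.prems obtain a b where ab: "a \<in> A" "b \<in> B"
    and max: "\<forall>a'\<in>A. \<forall>b'\<in>B. match_kernel L h a' b' \<le> match_kernel L h a b"
    by (metis finite_pairs_have_max)
  have "n = card (A - {a})" "card (A - {a}) \<le> card (B - {b})"
    using Suc.hyps(2) Suc.prems(3) ab by simp_all
  then obtain \<sigma> where \<sigma>: "inj_on \<sigma> (A - {a})" "\<sigma> ` (A - {a}) \<subseteq> B - {b}"
    "(\<Sum>x\<in>A - {a}. match_kernel L h x (\<sigma> x)) = histogram_intersection L h (A - {a}) (B - {b})"
    using Suc.hyps(1) Suc.prems(1,2) by blast
  have b_new: "b \<notin> \<sigma> ` (A - {a})" using \<sigma>(2) by auto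
  have "inj_on (\<sigma>(a := b)) (insert a (A - {a}))"
    unfolding inj_on_insert using inj_on_fun_updI[OF \<sigma>(1) b_new] b_new by simp
  then have inj: "inj_on (\<sigma>(a := b)) A" using ab(1) by (simp add: insert_absorb)
  have into: "(\<sigma>(a := b)) ` A \<subseteq> B" using \<sigma>(2) ab by auto
  have "(\<Sum>x\<in>A. match_kernel L h x ((\<sigma>(a := b)) x))
          = match_kernel L h a b + (\<Sum>x\<in>A - {a}. match_kernel L h x (\<sigma> x))"
    using sum.remove[OF Suc.prems(1) ab(1), of "\<lambda>x. match_kernel L h x ((\<sigma>(a := b)) x)"]
    by simp
  also have "match_kernel L h a b + (\<Sum>x\<in>A - {a}. match_kernel L h x (\<sigma> x))
               = histogram_intersection L h A B"
    unfolding \<sigma>(3) by (rule histogram_intersection_remove_max[OF assms(1) Suc.prems(1,2) ab max])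
  finally have sum: "(\<Sum>x\<in>A. match_kernel L h x ((\<sigma>(a := b)) x)) = histogram_intersection L h A B" .
  show ?case using inj into sum by (intro exI[of _ "\<sigma>(a := b)"] conjI)
qed

lemma finite_assignment_values:
  assumes "finite A" "finite B"
  shows "finite {(\<Sum>a\<in>A. k a (\<sigma> a)) | \<sigma>. inj_on \<sigma> A \<and> \<sigma> ` A \<subseteq> B}"
proof (rule finite_subset)
  show "{(\<Sum>a\<in>A. k a (\<sigma> a)) | \<sigma>. inj_on \<sigma> A \<and> \<sigma> ` A \<subseteq> B}
          \<subseteq> (\<lambda>\<tau>. \<Sum>a\<in>A. k a (\<tau> a)) ` (A \<rightarrow>\<^sub>E B)"
  proof
    fix x assume "x \<in> {(\<Sum>a\<in>A. k a (\<sigma> a)) | \<sigma>. inj_on \<sigma> A \<and> \<sigma> ` A \<subseteq> B}"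
    then obtain \<sigma> where "x = (\<Sum>a\<in>A. k a (\<sigma> a))" "\<sigma> ` A \<subseteq> B" by auto
    then show "x \<in> (\<lambda>\<tau>. \<Sum>a\<in>A. k a (\<tau> a)) ` (A \<rightarrow>\<^sub>E B)"
      by (intro image_eqI[of _ _ "restrict \<sigma> A"]) auto
  qed
  show "finite ((\<lambda>\<tau>. \<Sum>a\<in>A. k a (\<tau> a)) ` (A \<rightarrow>\<^sub>E B))"
    using assms by (intro finite_imageI finite_PiE) auto
qed

lemma oa_inj_match_kernel:
  assumes "refining L" "finite A" "finite B" "card A \<le> card B"
  shows "oa_inj (match_kernel L h) A B = histogram_intersection L h A B"
  unfolding oa_inj_def
proof (rule Max_eqI)
  show "finite {(\<Sum>a\<in>A. match_kernel L h a (\<sigma> a)) | \<sigma>. inj_on \<sigma> A \<and> \<sigma> ` A \<subseteq> B}"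
    by (rule finite_assignment_values[OF assms(2,3)])
  show "y \<le> histogram_intersection L h A B"
    if "y \<in> {(\<Sum>a\<in>A. match_kernel L h a (\<sigma> a)) | \<sigma>. inj_on \<sigma> A \<and> \<sigma> ` A \<subseteq> B}" for y
  proof -
    from that obtain \<sigma> where "y = (\<Sum>a\<in>A. match_kernel L h a (\<sigma> a))" "inj_on \<sigma> A" "\<sigma> ` A \<subseteq> B"
      by blast
    then show ?thesis using assignment_sum_le_histogram_intersection[OF assms(2,3)] by simp
  qed
  obtain \<sigma> where "inj_on \<sigma> A" "\<sigma> ` A \<subseteq> B"
    "(\<Sum>a\<in>A. match_kernel L h a (\<sigma> a)) = histogram_intersection L h A B"
    using exists_assignment_eq_histogram_intersection[OF assms, of h] by blast
  then show "histogram_intersection L h A B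
               \<in> {(\<Sum>a\<in>A. match_kernel L h a (\<sigma> a)) | \<sigma>. inj_on \<sigma> A \<and> \<sigma> ` A \<subseteq> B}"
    by (intro CollectI exI[of _ \<sigma>]) simp
qed

lemma OA_match_kernel:
  assumes "refining L" "finite A" "finite B"
  shows "OA (match_kernel L h) A B = histogram_intersection L h A B"
  using oa_inj_match_kernel[OF assms] oa_inj_match_kernel[OF assms(1,3,2)]
    histogram_intersection_commute[OF assms(2,3), of L h]
  unfolding OA_def by auto

lemma gram_form_nonneg_if_feature_map:
  fixes \<phi> :: "'s \<Rightarrow> 'j \<Rightarrow> real"
  assumes "finite J" "\<forall>x\<in>set xs. \<forall>y\<in>set xs. K x y = (\<Sum>j\<in>J. \<phi> x j * \<phi> y j)"
  shows "(\<Sum>p<length xs. \<Sum>q<length xs. c p * c q * K (xs ! p) (xs ! q)) \<ge> 0"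
proof -
  let ?n = "length xs"
  have "(\<Sum>p<?n. \<Sum>q<?n. c p * c q * K (xs ! p) (xs ! q))
          = (\<Sum>p<?n. \<Sum>q<?n. \<Sum>j\<in>J. (c p * \<phi> (xs ! p) j) * (c q * \<phi> (xs ! q) j))"
    using assms(2) by (intro sum.cong refl) (simp add: sum_distrib_left mult_ac)
  also have "\<dots> = (\<Sum>p<?n. \<Sum>j\<in>J. \<Sum>q<?n. (c p * \<phi> (xs ! p) j) * (c q * \<phi> (xs ! q) j))"
    by (intro sum.cong refl) (rule sum.swap)
  also have "\<dots> = (\<Sum>j\<in>J. \<Sum>p<?n. \<Sum>q<?n. (c p * \<phi> (xs ! p) j) * (c q * \<phi> (xs ! q) j))"
    by (rule sum.swap)
  also have "\<dots> = (\<Sum>j\<in>J. (\<Sum>p<?n. c p * \<phi> (xs ! p) j)\<^sup>2)"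
    by (simp add: sum_product power2_eq_square)
  also have "\<dots> \<ge> 0" by (intro sum_nonneg) simp
  finally show ?thesis .
qed

lemma real_min_eq_sum_indicators:
  assumes "m \<le> N"
  shows "real (min m n) = (\<Sum>t<N. (if t < m then 1 else 0) * (if t < n then 1 else 0))"
proof -
  have "(\<Sum>t<N. (if t < m then 1 else 0) * (if t < n then 1 else 0))
          = (\<Sum>t\<in>{..<N}. if t < min m n then 1 else (0::real))"
    by (intro sum.cong refl) auto
  also have "\<dots> = real (card {t \<in> {..<N}. t < min m n})"
    using sum.inter_filter[of "{..<N}" "\<lambda>_. 1::real" "\<lambda>t. t < min m n", symmetric] by simp
  also have "{t \<in> {..<N}. t < min m n} = {..<min m n}" using assms by auto
  finally show ?thesis by simp
qed

definition histogram_feature :: "(nat \<Rightarrow> 'x \<Rightarrow> 'c) \<Rightarrow> 'x set \<Rightarrow> nat \<times> 'c \<times> nat \<Rightarrow> real" where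
  "histogram_feature L A = (\<lambda>(i, c, t). if t < colour_count L i A c then 1 else 0)"

lemma histogram_intersection_eq_feature_product:
  assumes "finite A" "finite C" "\<And>i. i \<le> h \<Longrightarrow> L i ` A \<subseteq> C" "card A \<le> N"
  shows "histogram_intersection L h A B
           = (\<Sum>j\<in>{0..h} \<times> C \<times> {..<N}. histogram_feature L A j * histogram_feature L B j)"
proof -
  have "level_intersection L i A B = (\<Sum>c\<in>C. \<Sum>t<N.
          histogram_feature L A (i, c, t) * histogram_feature L B (i, c, t))"
    if "i \<le> h" for i
    unfolding level_intersection_eq_sum[of C L i A B, OF assms(2) assms(3)[OF that]]
      histogram_feature_def prod.case
    using le_trans[OF colour_count_le_card[OF assms(1)] assms(4)]
    by (intro sum.cong refl real_min_eq_sum_indicators)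
  then show ?thesis
    unfolding histogram_intersection_def by (simp add: sum.cartesian_product)
qed

lemma valid_kernel_histogram_intersection:
  assumes "\<forall>s\<in>S. finite (A s)"
  shows "valid_kernel S (\<lambda>s t. histogram_intersection L h (A s) (A t))"
  unfolding valid_kernel_def
proof (intro conjI allI impI ballI)
  fix s t assume "s \<in> S" "t \<in> S"
  then show "histogram_intersection L h (A s) (A t) = histogram_intersection L h (A t) (A s)"
    using assms by (simp add: histogram_intersection_commute)
next
  fix xs :: "'a list" and c :: "nat \<Rightarrow> real"
  assume "set xs \<subseteq> S"
  \<comment> \<open>the feature space only needs to accommodate the finitely many sets indexed by xs\<close>
  define C where "C = (\<Union>i\<in>{0..h}. \<Union>s\<in>set xs. L i ` A s)"
  define N where "N = (\<Sum>s\<in>set xs. card (A s))"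
  have fin: "finite (A s)" if "s \<in> set xs" for s
    using assms \<open>set xs \<subseteq> S\<close> that by auto
  then have "finite C" unfolding C_def by auto
  have colours: "L i ` A s \<subseteq> C" if "i \<le> h" "s \<in> set xs" for i s
  proof -
    have "L i ` A s \<subseteq> (\<Union>s\<in>set xs. L i ` A s)" using that(2) by (rule UN_upper)
    also have "\<dots> \<subseteq> C" unfolding C_def using that(1) by (intro UN_upper) simp
    finally show ?thesis .
  qed
  have sizes: "card (A s) \<le> N" if "s \<in> set xs" for s
    unfolding N_def using that by (intro member_le_sum) auto
  have features: "\<forall>s\<in>set xs. \<forall>t\<in>set xs. histogram_intersection L h (A s) (A t)
      = (\<Sum>j\<in>{0..h} \<times> C \<times> {..<N}. histogram_feature L (A s) j * histogram_feature L (A t) j)"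
    using fin colours sizes \<open>finite C\<close> by (intro ballI histogram_intersection_eq_feature_product)
  show "(\<Sum>p<length xs. \<Sum>q<length xs. c p * c q
          * histogram_intersection L h (A (xs ! p)) (A (xs ! q))) \<ge> 0"
    using gram_form_nonneg_if_feature_map[OF _ features, of c] \<open>finite C\<close> by simp
qed

lemma valid_kernel_eq_on:
  assumes "valid_kernel S K" "\<And>x y. x \<in> S \<Longrightarrow> y \<in> S \<Longrightarrow> K' x y = K x y"
  shows "valid_kernel S K'"
proof -
  have "(\<Sum>i<length xs. \<Sum>j<length xs. c i * c j * K' (xs ! i) (xs ! j))
          = (\<Sum>i<length xs. \<Sum>j<length xs. c i * c j * K (xs ! i) (xs ! j))"
    if "set xs \<subseteq> S" for xs and c :: "nat \<Rightarrow> real"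
    using assms(2) that by (intro sum.cong refl) (auto dest: nth_mem)
  then show ?thesis using assms unfolding valid_kernel_def by simp
qed

lemma refining_wl:
  assumes "inj f"
  shows "refining (wl f V E lab)"
  unfolding refining_def using injD[OF assms] by auto

theorem mainTheorem11:
  fixes \<Sigma> :: "'c::linorder set"
    and \<G> :: "'g set"
    and V :: "'g \<Rightarrow> 'v set"
    and E :: "'g \<Rightarrow> 'v \<Rightarrow> 'v \<Rightarrow> bool"
    and lab :: "'g \<Rightarrow> 'v \<Rightarrow> 'c"
    and f :: "'c list \<Rightarrow> 'c"
    and h :: nat
  assumes graphs: "\<forall>g\<in>\<G>. finite_simple_graph (V g) (E g)"
    and labels: "\<forall>g\<in>\<G>. lab g ` V g \<subseteq> \<Sigma>"
    and inj_f: "inj f"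
  shows "(\<forall>x\<in>disj_union \<G> V. \<forall>y\<in>disj_union \<G> V. \<forall>i<h.
            wl f V E lab i x \<noteq> wl f V E lab i y \<longrightarrow>
            wl f V E lab (Suc i) x \<noteq> wl f V E lab (Suc i) y)
       \<and> strong_kernel (disj_union \<G> V) (wl_base_kernel f V E lab h)
       \<and> (\<forall>g\<in>\<G>. \<forall>g'\<in>\<G>.
            wl_oa_kernel f V E lab h g g' =
            (\<Sum>i\<in>{0..h}. \<Sum>c\<in>wl f V E lab i ` ({g} \<times> V g) \<union> wl f V E lab i ` ({g'} \<times> V g').
               real (min (card {v \<in> V g. wl f V E lab i (g, v) = c})
                         (card {v \<in> V g'. wl f V E lab i (g', v) = c}))))
       \<and> valid_kernel \<G> (wl_oa_kernel f V E lab h)"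
proof -
  let ?L = "wl f V E lab"
  define A where "A g = {g} \<times> V g" for g
  have refining: "refining ?L" using inj_f by (rule refining_wl)
  have base: "wl_base_kernel f V E lab h = match_kernel ?L h"
    by (intro ext) (simp add: wl_base_kernel_def match_kernel_def)
  have fin: "finite (A g)" if "g \<in> \<G>" for g
    using graphs that unfolding finite_simple_graph_def A_def by auto
  have oa: "wl_oa_kernel f V E lab h g g' = histogram_intersection ?L h (A g) (A g')"
    if "g \<in> \<G>" "g' \<in> \<G>" for g g'
    using OA_match_kernel[OF refining fin[OF that(1)] fin[OF that(2)]]
    unfolding wl_oa_kernel_def base A_def .
  have formula: "wl_oa_kernel f V E lab h g g' =
          (\<Sum>i\<in>{0..h}. \<Sum>c\<in>?L i ` A g \<union> ?L i ` A g'.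
             real (min (colour_count ?L i (A g) c) (colour_count ?L i (A g') c)))"
    if "g \<in> \<G>" "g' \<in> \<G>" for g g'
    unfolding oa[OF that] histogram_intersection_def
    using fin that by (intro sum.cong refl level_intersection_eq_sum) auto
  have "valid_kernel \<G> (\<lambda>g g'. histogram_intersection ?L h (A g) (A g'))"
    using fin by (intro valid_kernel_histogram_intersection) blast
  then have valid: "valid_kernel \<G> (wl_oa_kernel f V E lab h)"
    using oa by (rule valid_kernel_eq_on)
  show ?thesis
    using refining strong_kernel_match_kernel[OF refining] formula valid
    unfolding base refining_def A_def colour_count_Times_singleton by blast
qed

end
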